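(* Let $F = \{f_1,\dots,f_N\}$ with $f_i(z) = a_i z + b_i$, $a_i,b_i\in\mathbb{Z}$. Let $z \in \mathbb{Z}$, let $\alpha, \beta$ be reduced regular expressions, and let $\ell$ be a finite (possibly empty) sequence of literals $i$ each with $a_i > 0$. Then: (1) $I(z, \ell \alpha^* \beta) \iff I(z, \ell \beta) \lor I(P_\ell(z), \alpha)$; (2) $I(z, \ell \alpha^* ) \iff I(z, \ell) \lor I(P_\ell(z), \alpha)$; (3) $I(z, \alpha^* \beta) \iff I(z, \alpha) \lor I(z, \beta)$; (4) $I(z, \alpha^* ) \iff I(z,\alpha)$.
   Context: Regular expressions are over the alphabet $\{1,\dots,N\}$ (literals), built with concatenation (written multiplicatively), union, Kleene star, $\epsilon$ (empty string) and $\emptyset$ (empty language); $L(E)$ is the language of $E$. For a word $s = e_1 e_2 \cdots e_K$ put $P_s = f_{e_K} \circ \dots \circ f_{e_1}$ (with $P_\epsilon$ the identity). A regular expression is reduced if it contains no $\emptyset$ symbol, no union operation, and every literal $i$ occurring in it satisfies $a_i > 0$. For $z \in \mathbb{Z}$ and a reduced expression $E$, $I(z,E)$ is the statement: there exists $s \in L(E)$ with $P_s(z) > z$. *)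

theory Defs
  imports Main
begin

datatype rexp =
    Zero
  | One
  | Lit nat
  | Plus rexp rexp
  | Times rexp rexp
  | Star rexp

definition conc :: "nat list set \<Rightarrow> nat list set \<Rightarrow> nat list set" where
  "conc A B = {u @ v | u v. u \<in> A \<and> v \<in> B}"

inductive_set kstar :: "nat list set \<Rightarrow> nat list set" for A where
  kstar_Nil: "[] \<in> kstar A"
| kstar_app: "u \<in> A \<Longrightarrow> v \<in> kstar A \<Longrightarrow> u @ v \<in> kstar A"

fun lang :: "rexp \<Rightarrow> nat list set" where
  "lang Zero = {}"
| "lang One = {[]}"
| "lang (Lit i) = {[i]}"
| "lang (Plus r s) = lang r \<union> lang s"
| "lang (Times r s) = conc (lang r) (lang s)"
| "lang (Star r) = kstar (lang r)"

fun lits :: "rexp \<Rightarrow> nat set" where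
  "lits Zero = {}"
| "lits One = {}"
| "lits (Lit i) = {i}"
| "lits (Plus r s) = lits r \<union> lits s"
| "lits (Times r s) = lits r \<union> lits s"
| "lits (Star r) = lits r"

definition over_alphabet :: "nat \<Rightarrow> rexp \<Rightarrow> bool" where
  "over_alphabet N E \<longleftrightarrow> lits E \<subseteq> {1..N}"

fun no_zero_plus :: "rexp \<Rightarrow> bool" where
  "no_zero_plus Zero = False"
| "no_zero_plus One = True"
| "no_zero_plus (Lit i) = True"
| "no_zero_plus (Plus r s) = False"
| "no_zero_plus (Times r s) = (no_zero_plus r \<and> no_zero_plus s)"
| "no_zero_plus (Star r) = no_zero_plus r"

definition reduced :: "(nat \<Rightarrow> int) \<Rightarrow> rexp \<Rightarrow> bool" where
  "reduced a E \<longleftrightarrow> no_zero_plus E \<and> (\<forall>i\<in>lits E. a i > 0)"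

text \<open>P_s = f_{e_K} o ... o f_{e_1}, where f_i z = a_i z + b_i.\<close>
definition P :: "(nat \<Rightarrow> int) \<Rightarrow> (nat \<Rightarrow> int) \<Rightarrow> nat list \<Rightarrow> int \<Rightarrow> int" where
  "P a b s z = fold (\<lambda>i x. a i * x + b i) s z"

definition I :: "(nat \<Rightarrow> int) \<Rightarrow> (nat \<Rightarrow> int) \<Rightarrow> int \<Rightarrow> rexp \<Rightarrow> bool" where
  "I a b z E \<longleftrightarrow> (\<exists>s\<in>lang E. P a b s z > z)"

fun word :: "nat list \<Rightarrow> rexp" where
  "word [] = One"
| "word (i # l) = Times (Lit i) (word l)"

end

theory Submission
  imports Defs
begin

text \<open>Every map \<open>P_s\<close> built from slopes \<open>a_i > 0\<close> (hence \<open>a_i \<ge> 1\<close>) is monotone and does not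
shrink differences. So if no loop word of \<open>\<alpha>\<close> increases the current value, no word of \<open>\<alpha>\<^sup>*\<close> does,
and the continuation sees at most the original value; conversely a loop word \<open>s\<close> with
\<open>P_s(w) > w\<close> gains at least one per repetition, so enough repetitions followed by any word of the
(nonempty) continuation language overshoot any target.\<close>

lemma P_Nil [simp]: "P a b [] z = z"
  by (simp add: P_def)

lemma P_Cons: "P a b (i # s) z = P a b s (a i * z + b i)"
  by (simp add: P_def)

lemma P_append: "P a b (u @ v) z = P a b v (P a b u z)"
  by (simp add: P_def)

lemma P_diff_ge:
  assumes "\<forall>i\<in>set s. a i > 0" and "y \<le> x"
  shows "x - y \<le> P a b s x - P a b s y"
  using assms
proof (induction s arbitrary: x y)
  case Nil
  then show ?case by simp
next
  case (Cons i s)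
  have "x - y \<le> a i * (x - y)"
    using Cons.prems mult_right_mono[of 1 "a i" "x - y"] by simp
  also have "\<dots> = (a i * x + b i) - (a i * y + b i)"
    by (simp add: algebra_simps)
  also have "\<dots> \<le> P a b s (a i * x + b i) - P a b s (a i * y + b i)"
    using Cons.prems calculation by (intro Cons.IH) auto
  finally show ?case
    by (simp add: P_Cons)
qed

lemma P_mono:
  assumes "\<forall>i\<in>set s. a i > 0" and "y \<le> x"
  shows "P a b s y \<le> P a b s x"
  using P_diff_ge[OF assms, of b] assms(2) by linarith

lemma P_kstar_le:
  assumes "v \<in> kstar A"
    and "\<forall>s\<in>A. P a b s w \<le> w" and "\<forall>s\<in>A. \<forall>i\<in>set s. a i > 0"
  shows "P a b v w \<le> w \<and> (\<forall>i\<in>set v. a i > 0)"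
  using assms
proof (induction rule: kstar.induct)
  case kstar_Nil
  then show ?case by simp
next
  case (kstar_app u v)
  then have "P a b v (P a b u w) \<le> P a b v w"
    by (intro P_mono) auto
  with kstar_app show ?case
    by (auto simp: P_append)
qed

lemma concat_replicate_in_kstar: "s \<in> A \<Longrightarrow> concat (replicate k s) \<in> kstar A"
  by (induction k) (auto intro: kstar.intros)

lemma P_concat_replicate_ge:
  assumes "\<forall>i\<in>set s. a i > 0" and "w < P a b s w"
  shows "w + int k \<le> P a b (concat (replicate k s)) w"
proof (induction k)
  case 0
  then show ?case by simp
next
  case (Suc k)
  let ?v = "concat (replicate k s)"
  have "P a b s w - w + P a b ?v w \<le> P a b ?v (P a b s w)"
    using P_diff_ge[of ?v a w "P a b s w" b] assms by auto
  with Suc assms show ?case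
    by (simp add: P_append)
qed

lemma kstar_pump_P_gt:
  assumes s: "s \<in> A" "\<forall>i\<in>set s. a i > 0" "w < P a b s w"
    and t: "\<forall>i\<in>set t. a i > 0"
  shows "\<exists>v\<in>kstar A. z < P a b t (P a b v w)"
proof
  define k where "k = nat (z - P a b t w + 1)"
  define v where "v = concat (replicate k s)"
  show "v \<in> kstar A"
    using concat_replicate_in_kstar[OF s(1)] unfolding v_def .
  have v_ge: "w + int k \<le> P a b v w"
    using P_concat_replicate_ge[OF s(2,3)] unfolding v_def .
  have "P a b v w - w + P a b t w \<le> P a b t (P a b v w)"
    using P_diff_ge[OF t, of w "P a b v w" b] v_ge by auto
  with v_ge show "z < P a b t (P a b v w)"
    unfolding k_def by linarith
qed

lemma ex_kstar_P_gt_iff: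
  assumes A_pos: "\<forall>s\<in>A. \<forall>i\<in>set s. a i > 0"
    and T_pos: "\<forall>t\<in>T. \<forall>i\<in>set t. a i > 0" and "T \<noteq> {}"
  shows "(\<exists>v\<in>kstar A. \<exists>t\<in>T. z < P a b t (P a b v w)) \<longleftrightarrow>
         (\<exists>t\<in>T. z < P a b t w) \<or> (\<exists>s\<in>A. w < P a b s w)"
proof
  assume "\<exists>v\<in>kstar A. \<exists>t\<in>T. z < P a b t (P a b v w)"
  then obtain v t where v: "v \<in> kstar A" and t: "t \<in> T" and gt: "z < P a b t (P a b v w)"
    by blast
  show "(\<exists>t\<in>T. z < P a b t w) \<or> (\<exists>s\<in>A. w < P a b s w)"
  proof (rule ccontr)
    assume none: "\<not> ?thesis"
    then have "P a b v w \<le> w"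
      using P_kstar_le[OF v _ A_pos] by (meson not_le)
    then have "P a b t (P a b v w) \<le> P a b t w"
      using P_mono T_pos t by blast
    with none t gt show False
      by auto
  qed
next
  assume "(\<exists>t\<in>T. z < P a b t w) \<or> (\<exists>s\<in>A. w < P a b s w)"
  then show "\<exists>v\<in>kstar A. \<exists>t\<in>T. z < P a b t (P a b v w)"
  proof
    assume "\<exists>t\<in>T. z < P a b t w"
    then show ?thesis
      using kstar.kstar_Nil by force
  next
    assume "\<exists>s\<in>A. w < P a b s w"
    then obtain s where "s \<in> A" "w < P a b s w"
      by blast
    moreover obtain t where "t \<in> T"
      using \<open>T \<noteq> {}\<close> by blast
    ultimately show ?thesis
      using kstar_pump_P_gt[of s A a w b t z] A_pos T_pos by blast
  qed
qed

lemma lang_lits: "s \<in> lang E \<Longrightarrow> set s \<subseteq> lits E"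
proof (induction E arbitrary: s)
  case (Times r1 r2)
  then show ?case
    by (fastforce simp: conc_def)
next
  case (Star r)
  have "v \<in> kstar (lang r) \<Longrightarrow> set v \<subseteq> lits r" for v
    by (induction rule: kstar.induct) (use Star.IH in auto)
  with Star.prems show ?case
    by simp
qed auto

lemma lang_nonempty: "no_zero_plus E \<Longrightarrow> lang E \<noteq> {}"
proof (induction E)
  case (Times r1 r2)
  then show ?case
    by (auto simp: conc_def)
next
  case (Star r)
  then show ?case
    using kstar.kstar_Nil by auto
qed auto

lemma reduced_lang_pos: "reduced a E \<Longrightarrow> s \<in> lang E \<Longrightarrow> \<forall>i\<in>set s. a i > 0"
  using lang_lits unfolding reduced_def by blast

lemma lang_word: "lang (word l) = {l}"
  by (induction l) (auto simp: conc_def)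

lemma bex_conc_iff: "(\<exists>s\<in>conc A B. Q s) \<longleftrightarrow> (\<exists>u\<in>A. \<exists>v\<in>B. Q (u @ v))"
  by (auto simp: conc_def)

lemma conc_Nil_right [simp]: "conc A {[]} = A"
  by (simp add: conc_def)

lemma conc_Nil_left [simp]: "conc {[]} A = A"
  by (simp add: conc_def)

lemma I_word_Star_Times_iff:
  assumes "reduced a \<alpha>" and "reduced a \<beta>" and "\<forall>i\<in>set l. a i > 0"
  shows "I a b z (Times (word l) (Times (Star \<alpha>) \<beta>)) \<longleftrightarrow>
         I a b z (Times (word l) \<beta>) \<or> I a b (P a b l z) \<alpha>"
proof -
  have "I a b z (Times (word l) (Times (Star \<alpha>) \<beta>)) \<longleftrightarrow>
        (\<exists>v\<in>kstar (lang \<alpha>). \<exists>t\<in>lang \<beta>. z < P a b t (P a b v (P a b l z)))"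
    by (simp add: I_def bex_conc_iff lang_word P_append)
  also have "\<dots> \<longleftrightarrow> (\<exists>t\<in>lang \<beta>. z < P a b t (P a b l z)) \<or> I a b (P a b l z) \<alpha>"
    using assms reduced_lang_pos lang_nonempty
    by (subst ex_kstar_P_gt_iff) (auto simp: I_def reduced_def)
  also have "\<dots> \<longleftrightarrow> I a b z (Times (word l) \<beta>) \<or> I a b (P a b l z) \<alpha>"
    by (simp add: I_def bex_conc_iff lang_word P_append)
  finally show ?thesis .
qed

text \<open>Items (2)--(4) are (1) with \<open>\<beta> := \<epsilon>\<close> and/or \<open>\<ell> := []\<close>.\<close>

theorem mainTheorem6:
  fixes N :: nat and a b :: "nat \<Rightarrow> int" and z :: int
    and \<alpha> \<beta> :: rexp and l :: "nat list"
  assumes "over_alphabet N \<alpha>" and "reduced a \<alpha>"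
    and "over_alphabet N \<beta>" and "reduced a \<beta>"
    and "\<forall>i\<in>set l. i \<in> {1..N} \<and> a i > 0"
  shows "(I a b z (Times (word l) (Times (Star \<alpha>) \<beta>)) \<longleftrightarrow>
            I a b z (Times (word l) \<beta>) \<or> I a b (P a b l z) \<alpha>)
       \<and> (I a b z (Times (word l) (Star \<alpha>)) \<longleftrightarrow>
            I a b z (word l) \<or> I a b (P a b l z) \<alpha>)
       \<and> (I a b z (Times (Star \<alpha>) \<beta>) \<longleftrightarrow> I a b z \<alpha> \<or> I a b z \<beta>)
       \<and> (I a b z (Star \<alpha>) \<longleftrightarrow> I a b z \<alpha>)"
proof -
  have l_pos: "\<forall>i\<in>set l. a i > 0"
    using assms(5) by blast
  have One_reduced: "reduced a One"
    by (simp add: reduced_def)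
  note iff = I_word_Star_Times_iff[OF assms(2)]
  show ?thesis
    using iff[OF assms(4) l_pos] iff[OF One_reduced l_pos] iff[OF assms(4), of "[]"] iff[OF One_reduced, of "[]"]
    by (auto simp: I_def)
qed

end
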